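(* Let $\Omega\subset\mathbb{R}^2$ be a bounded domain, $X\subset\overline{\Omega}$ finite with $X\setminus\partial\Omega\subset\mathrm{int}(\mathrm{conv}(X\cap\partial\Omega))$, and $f_X$ a discrete load on $X$. Let $x_1,x_2,x_3\in X$ be colinear with $x_2\in[x_1,x_3]$. Assume $(\mathbf{s},\mathbf{q},\mathbf{r})$ solves $(\mathcal{P}_X)$ and $(\mathbf{u}_1,\mathbf{u}_2,\mathbf{w})$ (together with some slack vectors) solves $(\mathcal{P}_X^* )$, and set $\mathbf{z}=\frac12\mathbf{w}$, identified with the function $z:X\to\mathbb{R}$ that equals $z_i$ at $\chi(i)$ and vanishes on $X\cap\partial\Omega$. Let $k$ be the bar index with $\{\chi_-(k),\chi_+(k)\}=\{x_1,x_3\}$. If $s_k\ne0$, then the points $(x_1,z(x_1)),(x_2,z(x_2)),(x_3,z(x_3))\in\mathbb{R}^3$ are colinear.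
   Context: Discrete setting: $\bar n=\#X$, $n=\#(X\setminus\partial\Omega)$, enumeration $\chi:\{1,\dots,n\}\to X\setminus\partial\Omega$; $m=\bar n(\bar n-1)/2$ and enumeration $k\mapsto\{\chi_-(k),\chi_+(k)\}$ of all unordered pairs of distinct points of $X$. $\mathbf{f}\in\mathbb{R}^n$, $f_i=f_X(\{\chi(i)\})$; $l_k=|\chi_+(k)-\chi_-(k)|$. Vectors $\mathbf{u}_1,\mathbf{u}_2,\mathbf{w}\in\mathbb{R}^n$ are identified with $u:X\to\mathbb{R}^2$, $w:X\to\mathbb{R}$ vanishing on $X\cap\partial\Omega$ ($(u_{1;i},u_{2;i})=u(\chi(i))$, $w_i=w(\chi(i))$). $\mathbf{B}_1,\mathbf{B}_2,\mathbf{D}\in\mathbb{R}^{m\times n}$: $(\mathbf{B}_1\mathbf{u}_1+\mathbf{B}_2\mathbf{u}_2)_k=(u(\chi_+(k))-u(\chi_-(k)))\cdot(\chi_+(k)-\chi_-(k))/l_k$, $(\mathbf{D}\mathbf{w})_k=w(\chi_+(k))-w(\chi_-(k))$. $\mathrm{K}=\{(t_1,t_2,t_3):t_1,t_2\ge0,2t_1t_2\ge t_3^2\}$, applied componentwise as $\mathrm{K}^m$. $(\mathcal{P}_X)$: $\inf\{\mathbf{l}^\top\mathbf{s}+2\mathbf{l}^\top\mathbf{r}:\mathbf{s},\mathbf{r}\in\mathbb{R}^m_+,\mathbf{q}\in\mathbb{R}^m,\mathbf{B}_1^\top\mathbf{s}=\mathbf{B}_2^\top\mathbf{s}=\mathbf{0},\mathbf{D}^\top\mathbf{q}=\mathbf{f},(\mathbf{r},\mathbf{s},\mathbf{q})\in\mathrm{K}^m\}$.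 $(\mathcal{P}_X^* )$: $\sup\{\mathbf{f}^\top\mathbf{w}:\mathbf{t}_2+\mathbf{B}_1\mathbf{u}_1+\mathbf{B}_2\mathbf{u}_2=\mathbf{l},\mathbf{t}_3+\mathbf{D}\mathbf{w}=\mathbf{0},\mathbf{t}_1=2\mathbf{l},(\mathbf{t}_1,\mathbf{t}_2,\mathbf{t}_3)\in\mathrm{K}^m\}$ over $\mathbf{u}_1,\mathbf{u}_2,\mathbf{w}\in\mathbb{R}^n$, $\mathbf{t}_1,\mathbf{t}_2\in\mathbb{R}^m_+$, $\mathbf{t}_3\in\mathbb{R}^m$. *)

theory Defs
  imports "HOL-Analysis.Analysis"
begin

type_synonym pt = "real^2"

definition inK :: "real \<Rightarrow> real \<Rightarrow> real \<Rightarrow> bool" where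
  "inK t1 t2 t3 \<longleftrightarrow> t1 \<ge> 0 \<and> t2 \<ge> 0 \<and> 2 * t1 * t2 \<ge> t3\<^sup>2"

definition barlen :: "(nat \<Rightarrow> pt) \<Rightarrow> (nat \<Rightarrow> pt) \<Rightarrow> nat \<Rightarrow> real" where
  "barlen chim chip k = norm (chip k - chim k)"

definition inc :: "(nat \<Rightarrow> pt) \<Rightarrow> (nat \<Rightarrow> pt) \<Rightarrow> (nat \<Rightarrow> pt) \<Rightarrow> nat \<Rightarrow> nat \<Rightarrow> real" where
  "inc chi chim chip k i =
     (if chi i = chip k then 1 else 0) - (if chi i = chim k then 1 else 0)"

definition Bmat :: "(nat \<Rightarrow> pt) \<Rightarrow> (nat \<Rightarrow> pt) \<Rightarrow> (nat \<Rightarrow> pt) \<Rightarrow> 2 \<Rightarrow> nat \<Rightarrow> nat \<Rightarrow> real" where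
  "Bmat chi chim chip j k i =
     inc chi chim chip k i * (chip k - chim k) $ j / barlen chim chip k"

definition Dmat :: "(nat \<Rightarrow> pt) \<Rightarrow> (nat \<Rightarrow> pt) \<Rightarrow> (nat \<Rightarrow> pt) \<Rightarrow> nat \<Rightarrow> nat \<Rightarrow> real" where
  "Dmat chi chim chip k i = inc chi chim chip k i"

text \<open>Feasibility and objective for (P_X); vectors in R^n, R^m are functions on {..<n}, {..<m}.\<close>
definition primal_feasible ::
  "(nat \<Rightarrow> pt) \<Rightarrow> nat \<Rightarrow> (nat \<Rightarrow> pt) \<Rightarrow> (nat \<Rightarrow> pt) \<Rightarrow> nat \<Rightarrow> (nat \<Rightarrow> real)
   \<Rightarrow> (nat \<Rightarrow> real) \<Rightarrow> (nat \<Rightarrow> real) \<Rightarrow> (nat \<Rightarrow> real) \<Rightarrow> bool" where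
  "primal_feasible chi n chim chip m f s q r \<longleftrightarrow>
     (\<forall>k<m. s k \<ge> 0 \<and> r k \<ge> 0 \<and> inK (r k) (s k) (q k)) \<and>
     (\<forall>i<n. (\<Sum>k<m. Bmat chi chim chip 1 k i * s k) = 0) \<and>
     (\<forall>i<n. (\<Sum>k<m. Bmat chi chim chip 2 k i * s k) = 0) \<and>
     (\<forall>i<n. (\<Sum>k<m. Dmat chi chim chip k i * q k) = f i)"

definition primal_obj ::
  "(nat \<Rightarrow> pt) \<Rightarrow> (nat \<Rightarrow> pt) \<Rightarrow> nat \<Rightarrow> (nat \<Rightarrow> real) \<Rightarrow> (nat \<Rightarrow> real) \<Rightarrow> real" where
  "primal_obj chim chip m s r =
     (\<Sum>k<m. barlen chim chip k * s k) + 2 * (\<Sum>k<m. barlen chim chip k * r k)"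

definition primal_solution ::
  "(nat \<Rightarrow> pt) \<Rightarrow> nat \<Rightarrow> (nat \<Rightarrow> pt) \<Rightarrow> (nat \<Rightarrow> pt) \<Rightarrow> nat \<Rightarrow> (nat \<Rightarrow> real)
   \<Rightarrow> (nat \<Rightarrow> real) \<Rightarrow> (nat \<Rightarrow> real) \<Rightarrow> (nat \<Rightarrow> real) \<Rightarrow> bool" where
  "primal_solution chi n chim chip m f s q r \<longleftrightarrow>
     primal_feasible chi n chim chip m f s q r \<and>
     (\<forall>s' q' r'. primal_feasible chi n chim chip m f s' q' r' \<longrightarrow>
        primal_obj chim chip m s r \<le> primal_obj chim chip m s' r')"

definition dual_feasible ::
  "(nat \<Rightarrow> pt) \<Rightarrow> nat \<Rightarrow> (nat \<Rightarrow> pt) \<Rightarrow> (nat \<Rightarrow> pt) \<Rightarrow> nat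
   \<Rightarrow> (nat \<Rightarrow> real) \<Rightarrow> (nat \<Rightarrow> real) \<Rightarrow> (nat \<Rightarrow> real)
   \<Rightarrow> (nat \<Rightarrow> real) \<Rightarrow> (nat \<Rightarrow> real) \<Rightarrow> (nat \<Rightarrow> real) \<Rightarrow> bool" where
  "dual_feasible chi n chim chip m u1 u2 w t1 t2 t3 \<longleftrightarrow>
     (\<forall>k<m.
        t1 k \<ge> 0 \<and> t2 k \<ge> 0 \<and>
        t2 k + (\<Sum>i<n. Bmat chi chim chip 1 k i * u1 i + Bmat chi chim chip 2 k i * u2 i)
          = barlen chim chip k \<and>
        t3 k + (\<Sum>i<n. Dmat chi chim chip k i * w i) = 0 \<and>
        t1 k = 2 * barlen chim chip k \<and>
        inK (t1 k) (t2 k) (t3 k))"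

definition dual_obj :: "nat \<Rightarrow> (nat \<Rightarrow> real) \<Rightarrow> (nat \<Rightarrow> real) \<Rightarrow> real" where
  "dual_obj n f w = (\<Sum>i<n. f i * w i)"

definition dual_solution ::
  "(nat \<Rightarrow> pt) \<Rightarrow> nat \<Rightarrow> (nat \<Rightarrow> pt) \<Rightarrow> (nat \<Rightarrow> pt) \<Rightarrow> nat \<Rightarrow> (nat \<Rightarrow> real)
   \<Rightarrow> (nat \<Rightarrow> real) \<Rightarrow> (nat \<Rightarrow> real) \<Rightarrow> (nat \<Rightarrow> real) \<Rightarrow> bool" where
  "dual_solution chi n chim chip m f u1 u2 w \<longleftrightarrow>
     (\<exists>t1 t2 t3. dual_feasible chi n chim chip m u1 u2 w t1 t2 t3) \<and>
     (\<forall>u1' u2' w' t1' t2' t3'. dual_feasible chi n chim chip m u1' u2' w' t1' t2' t3' \<longrightarrow>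
        dual_obj n f w' \<le> dual_obj n f w)"

definition node_fun :: "(nat \<Rightarrow> pt) \<Rightarrow> nat \<Rightarrow> (nat \<Rightarrow> real) \<Rightarrow> pt \<Rightarrow> real" where
  "node_fun chi n v x = (if \<exists>i<n. chi i = x then v (THE i. i < n \<and> chi i = x) else 0)"

end

theory Submission
  imports Defs "HOL-Library.Function_Algebras"
begin

text \<open>
  The programs \<open>(P_X)\<close> and \<open>(P_X^*)\<close> are dual conic programs over the self-dual cone \<open>K\<close>.
  The KKT conditions of the dual, obtained from Farkas' lemma (the origin is strictly feasible),
  produce a primal point with the same value, so there is no duality gap. The gap is the sum
  over all bars of pairings of a primal and a dual vector of \<open>K\<close>, each of them nonnegative;
  hence a bar with \<open>s\<^sub>k \<noteq> 0\<close> has a tight dual constraint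
  \<open>(D w)\<^sub>k\<^sup>2 = 4 l\<^sub>k (l\<^sub>k - (B u)\<^sub>k)\<close>.
  If \<open>x\<^sub>2\<close> lies on the bar \<open>[x\<^sub>1, x\<^sub>3]\<close>, the axial elongations of the two sub-bars add up
  to that of the whole bar, and the dual constraints of the sub-bars together with the tight one
  of the whole bar are the equality case of
  \<open>p\<^sup>2/l\<^sub>1 + q\<^sup>2/l\<^sub>2 \<ge> (p + q)\<^sup>2/(l\<^sub>1 + l\<^sub>2)\<close>: the jumps of \<open>w\<close> are proportional to the
  lengths, i.e. \<open>w\<close> is affine along the bar.
\<close>

section \<open>Farkas lemma and KKT conditions\<close>

\<comment> \<open>Pointwise operations, so that the dual variables \<open>(u\<^sub>1, u\<^sub>2, w)\<close> form a real vector space.\<close>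
instantiation "fun" :: (type, real_vector) real_vector
begin

definition scaleR_fun :: "real \<Rightarrow> ('a \<Rightarrow> 'b) \<Rightarrow> 'a \<Rightarrow> 'b" where
  "scaleR_fun c f = (\<lambda>x. c *\<^sub>R f x)"

instance
  by standard (simp_all add: scaleR_fun_def fun_eq_iff scaleR_add_right scaleR_add_left)

end

lemma farkas_lemma:
  fixes \<phi> :: "'j \<Rightarrow> 'v::real_vector \<Rightarrow> real" and \<psi> :: "'v \<Rightarrow> real"
  assumes "finite J" and "\<And>j. j \<in> J \<Longrightarrow> linear (\<phi> j)" and "linear \<psi>"
    and "\<And>x. (\<And>j. j \<in> J \<Longrightarrow> \<phi> j x \<ge> 0) \<Longrightarrow> \<psi> x \<ge> 0"
  shows "\<exists>c. (\<forall>j\<in>J. c j \<ge> 0) \<and> (\<forall>x. \<psi> x = (\<Sum>j\<in>J. c j * \<phi> j x))"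
  using assms
proof (induction J arbitrary: \<phi> \<psi> rule: finite_induct)
  case empty
  have "\<psi> x = 0" for x
    using empty.prems(3)[of x] empty.prems(3)[of "- x"] linear_neg[OF empty.prems(2)] by simp
  then show ?case by simp
next
  case (insert j0 J)
  have lin_j0: "linear (\<phi> j0)" using insert.prems(1) by simp
  obtain c0 \<mu> where "c0 \<ge> 0" "\<forall>j\<in>J. \<mu> j \<ge> 0"
    and "\<And>x. \<psi> x = c0 * \<phi> j0 x + (\<Sum>j\<in>J. \<mu> j * \<phi> j x)"
  proof (cases "\<forall>x. (\<forall>j\<in>J. \<phi> j x \<ge> 0) \<longrightarrow> \<psi> x \<ge> 0")
    case True
    then show ?thesis
      using insert.IH[of \<phi> \<psi>] insert.prems that[of 0] by auto
  next
    case False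
    then obtain z where z: "\<forall>j\<in>J. \<phi> j z \<ge> 0" "\<psi> z < 0" by force
    have "\<phi> j0 z < 0"
      using insert.prems(3)[of z] z by (force simp: not_less)
    \<comment> \<open>Project along \<open>z\<close> onto the kernel of \<open>\<phi> j0\<close> and apply the induction hypothesis there.\<close>
    define P where "P x = x - (\<phi> j0 x / \<phi> j0 z) *\<^sub>R z" for x
    have "linear P"
      by (rule linearI) (simp_all add: P_def linear_add[OF lin_j0] linear_scale[OF lin_j0]
          add_divide_distrib algebra_simps)
    have P_j0: "\<phi> j0 (P x) = 0" for x
      using \<open>\<phi> j0 z < 0\<close> by (simp add: P_def linear_diff[OF lin_j0] linear_scale[OF lin_j0])
    have "\<exists>\<mu>. (\<forall>j\<in>J. \<mu> j \<ge> 0) \<and> (\<forall>x. (\<psi> \<circ> P) x = (\<Sum>j\<in>J. \<mu> j * (\<phi> j \<circ> P) x))"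
    proof (rule insert.IH)
      show "linear (\<phi> j \<circ> P)" if "j \<in> J" for j
        using \<open>linear P\<close> insert.prems(1) that by (simp add: linear_compose)
      show "linear (\<psi> \<circ> P)"
        using \<open>linear P\<close> insert.prems(2) by (simp add: linear_compose)
      show "(\<psi> \<circ> P) x \<ge> 0" if "\<And>j. j \<in> J \<Longrightarrow> (\<phi> j \<circ> P) x \<ge> 0" for x
        using insert.prems(3)[of "P x"] that P_j0 by (metis comp_apply insertE order_refl)
    qed
    then obtain \<mu> where \<mu>: "\<forall>j\<in>J. \<mu> j \<ge> 0" "\<And>x. \<psi> (P x) = (\<Sum>j\<in>J. \<mu> j * \<phi> j (P x))"
      by auto
    define c0 where "c0 = (\<psi> z - (\<Sum>j\<in>J. \<mu> j * \<phi> j z)) / \<phi> j0 z"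
    have "(\<Sum>j\<in>J. \<mu> j * \<phi> j z) \<ge> 0" using \<mu>(1) z(1) by (simp add: sum_nonneg)
    then have "c0 \<ge> 0"
      unfolding c0_def using \<open>\<phi> j0 z < 0\<close> z(2) by (simp add: divide_nonpos_neg)
    moreover have "\<psi> x = c0 * \<phi> j0 x + (\<Sum>j\<in>J. \<mu> j * \<phi> j x)" for x
    proof -
      have lin: "\<And>f. linear f \<Longrightarrow> f (P x) = f x - (\<phi> j0 x / \<phi> j0 z) * f z"
        by (simp add: P_def linear_diff linear_scale)
      have "\<psi> x - (\<phi> j0 x / \<phi> j0 z) * \<psi> z
          = (\<Sum>j\<in>J. \<mu> j * \<phi> j x) - (\<phi> j0 x / \<phi> j0 z) * (\<Sum>j\<in>J. \<mu> j * \<phi> j z)"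
        using \<mu>(2)[of x] insert.prems(1,2)
        by (simp add: lin sum_subtractf sum_distrib_left algebra_simps)
      then show ?thesis
        unfolding c0_def using \<open>\<phi> j0 z < 0\<close> by (simp add: field_simps)
    qed
    ultimately show ?thesis using that \<mu>(1) by blast
  qed
  moreover have "(\<Sum>j\<in>J. (if j = j0 then c0 else \<mu> j) * \<phi> j x) = (\<Sum>j\<in>J. \<mu> j * \<phi> j x)" for x
    using insert.hyps(2) by (intro sum.cong) auto
  ultimately show ?case
    using insert.hyps by (intro exI[of _ "\<lambda>j. if j = j0 then c0 else \<mu> j"]) auto
qed

lemma eventually_at_right_0_quadratic_nonneg:
  fixes a b c :: real
  assumes "a > 0 \<or> (a = 0 \<and> b > 0)"
  shows "\<forall>\<^sub>F t in at_right 0. a + b * t + c * t\<^sup>2 \<ge> 0"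
  using assms
proof
  assume "a > 0"
  have "((\<lambda>t. a + b * t + c * t\<^sup>2) \<longlongrightarrow> a) (at_right 0)"
    by (intro tendsto_eq_intros) auto
  from order_tendstoD(1)[OF this \<open>a > 0\<close>] show ?thesis
    by eventually_elim simp
next
  assume "a = 0 \<and> b > 0"
  have "((\<lambda>t. b + c * t) \<longlongrightarrow> b) (at_right 0)"
    by (intro tendsto_eq_intros) auto
  from order_tendstoD(1)[OF this] \<open>a = 0 \<and> b > 0\<close> eventually_at_right_less[of 0]
  have "\<forall>\<^sub>F t in at_right 0. b + c * t > 0 \<and> t > (0::real)"
    by (simp add: eventually_conj_iff)
  then show ?thesis
  proof eventually_elim
    case (elim t)
    have "a + b * t + c * t\<^sup>2 = t * (b + c * t)"
      using \<open>a = 0 \<and> b > 0\<close> by (simp add: power2_eq_square algebra_simps)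
    then show ?case using elim by simp
  qed
qed

lemma linear_max_first_order:
  fixes A B :: "'k \<Rightarrow> 'v::real_vector \<Rightarrow> real" and F :: "'v \<Rightarrow> real"
  assumes "finite K" and L_pos: "\<And>k. k \<in> K \<Longrightarrow> L k > 0"
    and lin: "\<And>k. k \<in> K \<Longrightarrow> linear (A k)" "\<And>k. k \<in> K \<Longrightarrow> linear (B k)" "linear F"
    and feasible: "\<And>k. k \<in> K \<Longrightarrow> (B k x0)\<^sup>2 \<le> 4 * L k * (L k - A k x0)"
    and maximal: "\<And>x. (\<And>k. k \<in> K \<Longrightarrow> (B k x)\<^sup>2 \<le> 4 * L k * (L k - A k x)) \<Longrightarrow> F x \<le> F x0"
    and descent: "\<And>k. k \<in> K \<Longrightarrow> (B k x0)\<^sup>2 = 4 * L k * (L k - A k x0) \<Longrightarrow>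
      2 * B k x0 * B k d + 4 * L k * A k d \<le> 0"
  shows "F d \<le> 0"
proof (rule ccontr)
  assume "\<not> F d \<le> 0"
  define \<epsilon> where "\<epsilon> = F d / (2 * (\<bar>F x0\<bar> + 1))"
  have "\<epsilon> > 0"
    using \<open>\<not> F d \<le> 0\<close> by (simp add: \<epsilon>_def add_pos_nonneg)
  have "\<epsilon> * F x0 \<le> \<epsilon> * (\<bar>F x0\<bar> + 1)"
    using \<open>\<epsilon> > 0\<close> by (intro mult_left_mono) auto
  also have "\<dots> = F d / 2"
    by (simp add: \<epsilon>_def field_simps add_pos_nonneg)
  finally have gain: "F d - \<epsilon> * F x0 > 0" using \<open>\<not> F d \<le> 0\<close> by linarith
  \<comment> \<open>\<open>0\<close> is strictly feasible, so tilting \<open>d\<close> towards it makes every active constraint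
    strictly slack to first order.\<close>
  define e where "e = d - \<epsilon> *\<^sub>R x0"
  have "\<forall>\<^sub>F t in at_right 0. (B k (x0 + t *\<^sub>R e))\<^sup>2 \<le> 4 * L k * (L k - A k (x0 + t *\<^sub>R e))"
    if "k \<in> K" for k
  proof -
    define g where "g = 4 * L k * (L k - A k x0) - (B k x0)\<^sup>2"
    define D where "D = - (2 * B k x0 * B k e + 4 * L k * A k e)"
    have expand: "4 * L k * (L k - A k (x0 + t *\<^sub>R e)) - (B k (x0 + t *\<^sub>R e))\<^sup>2
        = g + D * t + (- (B k e)\<^sup>2) * t\<^sup>2" for t
      by (simp add: g_def D_def linear_add[OF lin(1)[OF that]] linear_add[OF lin(2)[OF that]]
          linear_scale[OF lin(1)[OF that]] linear_scale[OF lin(2)[OF that]]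
          power2_eq_square algebra_simps)
    have "g > 0 \<or> (g = 0 \<and> D > 0)"
    proof (cases "g = 0")
      case True
      have "D = - (2 * B k x0 * B k d + 4 * L k * A k d) + \<epsilon> * ((B k x0)\<^sup>2 + 4 * (L k)\<^sup>2)"
        using True by (simp add: D_def e_def g_def linear_diff[OF lin(1)[OF that]]
            linear_diff[OF lin(2)[OF that]] linear_scale[OF lin(1)[OF that]]
            linear_scale[OF lin(2)[OF that]] power2_eq_square algebra_simps)
      moreover have "2 * B k x0 * B k d + 4 * L k * A k d \<le> 0"
        using descent[OF that] True by (simp add: g_def)
      moreover have "\<epsilon> * ((B k x0)\<^sup>2 + 4 * (L k)\<^sup>2) > 0"
        using \<open>\<epsilon> > 0\<close> L_pos[OF that] by (simp add: add_nonneg_pos)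
      ultimately show ?thesis using True by simp
    next
      case False
      then show ?thesis using feasible[OF that] by (simp add: g_def)
    qed
    from eventually_at_right_0_quadratic_nonneg[OF this, of "- (B k e)\<^sup>2"]
    show ?thesis
      by eventually_elim (use expand in \<open>metis diff_ge_0_iff_ge\<close>)
  qed
  then have "\<forall>\<^sub>F t in at_right 0.
      \<forall>k\<in>K. (B k (x0 + t *\<^sub>R e))\<^sup>2 \<le> 4 * L k * (L k - A k (x0 + t *\<^sub>R e))"
    by (intro eventually_ball_finite \<open>finite K\<close> ballI)
  then have "\<forall>\<^sub>F t in at_right 0. t > 0 \<and>
      (\<forall>k\<in>K. (B k (x0 + t *\<^sub>R e))\<^sup>2 \<le> 4 * L k * (L k - A k (x0 + t *\<^sub>R e)))"
    using eventually_at_right_less[of "0::real"] by (simp add: eventually_conj_iff)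
  then obtain t where "t > 0"
    and t: "\<forall>k\<in>K. (B k (x0 + t *\<^sub>R e))\<^sup>2 \<le> 4 * L k * (L k - A k (x0 + t *\<^sub>R e))"
    using eventually_happens'[OF trivial_limit_at_right_real] by blast
  have "F (x0 + t *\<^sub>R e) = F x0 + t * (F d - \<epsilon> * F x0)"
    by (simp add: e_def linear_add[OF lin(3)] linear_diff[OF lin(3)] linear_scale[OF lin(3)]
        algebra_simps)
  also have "\<dots> > F x0" using \<open>t > 0\<close> gain by simp
  finally show False using maximal[of "x0 + t *\<^sub>R e"] t by fastforce
qed

lemma kkt_parabolic_constraints:
  fixes A B :: "'k \<Rightarrow> 'v::real_vector \<Rightarrow> real" and F :: "'v \<Rightarrow> real"
  assumes "finite K" and "\<And>k. k \<in> K \<Longrightarrow> L k > 0"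
    and lin: "\<And>k. k \<in> K \<Longrightarrow> linear (A k)" "\<And>k. k \<in> K \<Longrightarrow> linear (B k)" "linear F"
    and feasible: "\<And>k. k \<in> K \<Longrightarrow> (B k x0)\<^sup>2 \<le> 4 * L k * (L k - A k x0)"
    and maximal: "\<And>x. (\<And>k. k \<in> K \<Longrightarrow> (B k x)\<^sup>2 \<le> 4 * L k * (L k - A k x)) \<Longrightarrow> F x \<le> F x0"
  shows "\<exists>\<mu>. (\<forall>k\<in>K. \<mu> k \<ge> 0) \<and>
    (\<forall>k\<in>K. \<mu> k \<noteq> 0 \<longrightarrow> (B k x0)\<^sup>2 = 4 * L k * (L k - A k x0)) \<and>
    (\<forall>x. F x = (\<Sum>k\<in>K. \<mu> k * (2 * B k x0 * B k x + 4 * L k * A k x)))"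
proof -
  define J where "J = {k \<in> K. (B k x0)\<^sup>2 = 4 * L k * (L k - A k x0)}"
  define G where "G k x = 2 * B k x0 * B k x + 4 * L k * A k x" for k x
  have lin_G: "linear (G k)" if "k \<in> K" for k
    by (rule linearI)
      (simp_all add: G_def linear_add[OF lin(1)[OF that]] linear_add[OF lin(2)[OF that]]
        linear_scale[OF lin(1)[OF that]] linear_scale[OF lin(2)[OF that]] algebra_simps)
  have "\<exists>c. (\<forall>k\<in>J. c k \<ge> 0) \<and> (\<forall>x. - F x = (\<Sum>k\<in>J. c k * - G k x))"
  proof (rule farkas_lemma)
    show "finite J" using \<open>finite K\<close> by (simp add: J_def)
    show "linear (\<lambda>x. - G k x)" if "k \<in> J" for k
      using lin_G that by (simp add: J_def linear_compose_neg)
    show "linear (\<lambda>x. - F x)" using lin(3) by (rule linear_compose_neg)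
    show "- F x \<ge> 0" if "\<And>k. k \<in> J \<Longrightarrow> - G k x \<ge> 0" for x
      using linear_max_first_order[OF assms(1-7), where d = x] that by (force simp: J_def G_def)
  qed
  then obtain c where c: "\<forall>k\<in>J. c k \<ge> 0" "\<And>x. F x = (\<Sum>k\<in>J. c k * G k x)"
    by (auto simp: sum_negf)
  have "(\<Sum>k\<in>K. (if k \<in> J then c k else 0) * G k x) = (\<Sum>k\<in>J. c k * G k x)" for x
    using \<open>finite K\<close> by (intro sum.mono_neutral_cong_right) (auto simp: J_def)
  then show ?thesis
    using c by (intro exI[of _ "\<lambda>k. if k \<in> J then c k else 0"]) (auto simp: J_def G_def)
qed

section \<open>The second-order cone\<close>

lemma inK_pairing_nonneg:
  assumes "inK a1 a2 a3" and "inK b1 b2 b3"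
  shows "a1 * b1 + a2 * b2 + a3 * b3 \<ge> 0"
proof -
  have "(a3 * b3)\<^sup>2 \<le> (2 * a1 * a2) * (2 * b1 * b2)"
    using assms unfolding inK_def power_mult_distrib by (intro mult_mono) auto
  also have "\<dots> \<le> (a1 * b1 + a2 * b2)\<^sup>2"
    using zero_le_power2[of "a1 * b1 - a2 * b2"] by (simp add: power2_eq_square algebra_simps)
  moreover have "a1 * b1 + a2 * b2 \<ge> 0"
    using assms unfolding inK_def by simp
  ultimately have "\<bar>a3 * b3\<bar> \<le> a1 * b1 + a2 * b2"
    using power2_le_imp_le[of "\<bar>a3 * b3\<bar>"] by simp
  then show ?thesis by linarith
qed

lemma inK_pairing_zero_imp_boundary:
  assumes "inK a1 a2 a3" and "inK b1 b2 b3" and "a2 \<noteq> 0"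
    and "a1 * b1 + a2 * b2 + a3 * b3 = 0"
  shows "2 * b1 * b2 = b3\<^sup>2"
proof (rule ccontr)
  assume "2 * b1 * b2 \<noteq> b3\<^sup>2"
  with assms(2) have interior: "b3\<^sup>2 < 2 * b1 * b2" by (simp add: inK_def)
  show False
  proof (cases "a3 = 0")
    case True
    moreover have "a1 * b1 \<ge> 0" "a2 * b2 \<ge> 0"
      using assms(1,2) unfolding inK_def by simp_all
    moreover have "a1 * b1 + a2 * b2 = 0"
      using assms(4) True by simp
    ultimately have "a2 * b2 = 0" by linarith
    then show False
      using interior assms(3) by simp
  next
    case False
    have "a3\<^sup>2 * b3\<^sup>2 < a3\<^sup>2 * (2 * b1 * b2)"
      using interior False by simp
    also have "\<dots> \<le> (2 * a1 * a2) * (2 * b1 * b2)"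
      using assms(1,2) unfolding inK_def by (intro mult_right_mono) auto
    also have "\<dots> \<le> (a1 * b1 + a2 * b2)\<^sup>2"
      using zero_le_power2[of "a1 * b1 - a2 * b2"] by (simp add: power2_eq_square algebra_simps)
    also have "\<dots> = a3\<^sup>2 * b3\<^sup>2"
      using assms(4) by (simp add: eq_neg_iff_add_eq_0[symmetric] power_mult_distrib add.assoc)
    finally show False by simp
  qed
qed

section \<open>Bars along a line\<close>

lemma proportional_of_tight_sum_bound:
  fixes p q l1 l2 g1 g2 :: real
  assumes "l1 > 0" "l2 > 0" "p\<^sup>2 \<le> 4 * l1 * g1" "q\<^sup>2 \<le> 4 * l2 * g2"
    and "(p + q)\<^sup>2 = 4 * (l1 + l2) * (g1 + g2)"
  shows "p * l2 = q * l1"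
proof -
  have "(l1 + l2) * (p\<^sup>2 * l2 + q\<^sup>2 * l1) \<le> (l1 + l2) * ((4 * l1 * g1) * l2 + (4 * l2 * g2) * l1)"
    using assms by (intro mult_left_mono add_mono mult_right_mono) auto
  also have "\<dots> = (p + q)\<^sup>2 * (l1 * l2)"
    using assms(5) by (simp add: algebra_simps)
  finally have "(l1 + l2) * (p\<^sup>2 * l2 + q\<^sup>2 * l1) \<le> (p + q)\<^sup>2 * (l1 * l2)" .
  moreover have "(l1 + l2) * (p\<^sup>2 * l2 + q\<^sup>2 * l1) = (p + q)\<^sup>2 * (l1 * l2) + (p * l2 - q * l1)\<^sup>2"
    by (simp add: power2_eq_square algebra_simps)
  ultimately show ?thesis by simp
qed

definition axial_elongation :: "(pt \<Rightarrow> real) \<Rightarrow> (pt \<Rightarrow> real) \<Rightarrow> pt \<Rightarrow> pt \<Rightarrow> real" where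
  "axial_elongation U1 U2 a b =
     ((U1 b - U1 a) * (b - a) $ 1 + (U2 b - U2 a) * (b - a) $ 2) / norm (b - a)"

lemma axial_elongation_self [simp]: "axial_elongation U1 U2 a a = 0"
  by (simp add: axial_elongation_def)

lemma axial_elongation_along:
  assumes "b - a = t *\<^sub>R e" and "t > 0"
  shows "axial_elongation U1 U2 a b = ((U1 b - U1 a) * e $ 1 + (U2 b - U2 a) * e $ 2) / norm e"
proof -
  have "(b - a) $ j = t * e $ j" for j using assms(1) by simp
  moreover have "norm (b - a) = t * norm e" using assms by simp
  ultimately have "axial_elongation U1 U2 a b =
      (t * ((U1 b - U1 a) * e $ 1 + (U2 b - U2 a) * e $ 2)) / (t * norm e)"
    by (simp add: axial_elongation_def algebra_simps)
  then show ?thesis using assms(2) by simp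
qed

lemma axial_elongation_split:
  assumes "0 \<le> \<theta>" "\<theta> \<le> 1" "x2 = (1 - \<theta>) *\<^sub>R x1 + \<theta> *\<^sub>R x3"
  shows "axial_elongation U1 U2 x1 x3 = axial_elongation U1 U2 x1 x2 + axial_elongation U1 U2 x2 x3"
proof -
  consider "\<theta> = 0" | "\<theta> = 1" | "0 < \<theta>" "\<theta> < 1" using assms(1,2) by linarith
  then show ?thesis
  proof cases
    case 3
    have "x2 - x1 = \<theta> *\<^sub>R (x3 - x1)" "x3 - x2 = (1 - \<theta>) *\<^sub>R (x3 - x1)" "x3 - x1 = 1 *\<^sub>R (x3 - x1)"
      using assms(3) by (simp_all add: algebra_simps)
    with 3 show ?thesis
      by (simp only: axial_elongation_along[of _ _ _ "x3 - x1"])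
        (simp_all add: add_divide_distrib[symmetric] algebra_simps)
  qed (use assms(3) in simp_all)
qed

definition bar_slack :: "(pt \<Rightarrow> real) \<Rightarrow> (pt \<Rightarrow> real) \<Rightarrow> (pt \<Rightarrow> real) \<Rightarrow> pt \<Rightarrow> pt \<Rightarrow> real" where
  "bar_slack U1 U2 W a b =
     4 * norm (b - a) * (norm (b - a) - axial_elongation U1 U2 a b) - (W b - W a)\<^sup>2"

lemma bar_slack_self [simp]: "bar_slack U1 U2 W a a = 0"
  by (simp add: bar_slack_def)

lemma bar_slack_commute: "bar_slack U1 U2 W a b = bar_slack U1 U2 W b a"
proof -
  have "axial_elongation U1 U2 a b = axial_elongation U1 U2 b a"
    unfolding axial_elongation_def by (simp add: norm_minus_commute algebra_simps)
  then show ?thesis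
    unfolding bar_slack_def by (simp add: norm_minus_commute power2_commute)
qed

lemma affine_on_tight_bar:
  assumes "0 \<le> \<theta>" "\<theta> \<le> 1" "x2 = (1 - \<theta>) *\<^sub>R x1 + \<theta> *\<^sub>R x3"
    and "bar_slack U1 U2 W x1 x2 \<ge> 0" "bar_slack U1 U2 W x2 x3 \<ge> 0" "bar_slack U1 U2 W x1 x3 = 0"
  shows "W x2 = (1 - \<theta>) * W x1 + \<theta> * W x3"
proof -
  consider "\<theta> = 0" | "\<theta> = 1" | "x1 = x3" | "0 < \<theta>" "\<theta> < 1" "x1 \<noteq> x3"
    using assms(1,2) by linarith
  then show ?thesis
  proof cases
    case 4
    define N where "N = norm (x3 - x1)"
    have "N > 0" using 4 by (simp add: N_def)
    have "x2 - x1 = \<theta> *\<^sub>R (x3 - x1)" "x3 - x2 = (1 - \<theta>) *\<^sub>R (x3 - x1)"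
      using assms(3) by (simp_all add: algebra_simps)
    then have norms: "norm (x2 - x1) = \<theta> * N" "norm (x3 - x2) = (1 - \<theta>) * N"
      using 4 by (simp_all add: N_def)
    have "(W x2 - W x1) * ((1 - \<theta>) * N) = (W x3 - W x2) * (\<theta> * N)"
    proof (rule proportional_of_tight_sum_bound)
      show "(W x2 - W x1)\<^sup>2 \<le> 4 * (\<theta> * N) * (\<theta> * N - axial_elongation U1 U2 x1 x2)"
        using assms(4) norms by (simp add: bar_slack_def)
      show "(W x3 - W x2)\<^sup>2 \<le> 4 * ((1 - \<theta>) * N) * ((1 - \<theta>) * N - axial_elongation U1 U2 x2 x3)"
        using assms(5) norms by (simp add: bar_slack_def)
      show "(W x2 - W x1 + (W x3 - W x2))\<^sup>2 = 4 * (\<theta> * N + (1 - \<theta>) * N) *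
          (\<theta> * N - axial_elongation U1 U2 x1 x2 + ((1 - \<theta>) * N - axial_elongation U1 U2 x2 x3))"
        using assms(6) axial_elongation_split[OF assms(1-3), of U1 U2]
        by (simp add: bar_slack_def N_def algebra_simps)
    qed (use 4 \<open>N > 0\<close> in simp_all)
    then have "N * ((W x2 - W x1) * (1 - \<theta>) - (W x3 - W x2) * \<theta>) = 0"
      by (simp add: algebra_simps)
    then have "(W x2 - W x1) * (1 - \<theta>) = (W x3 - W x2) * \<theta>"
      using \<open>N > 0\<close> by simp
    then show ?thesis by (simp add: algebra_simps)
  qed (use assms(3) in \<open>simp_all add: algebra_simps\<close>)
qed

lemma collinear_graph_of_affine:
  fixes g :: "'a::real_vector \<Rightarrow> 'b::real_vector"
  assumes "x2 = (1 - \<theta>) *\<^sub>R x1 + \<theta> *\<^sub>R x3" and "g x2 = (1 - \<theta>) *\<^sub>R g x1 + \<theta> *\<^sub>R g x3"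
  shows "collinear {(x1, g x1), (x2, g x2), (x3, g x3)}"
  unfolding collinear_3_expand using assms by (auto intro!: exI[of _ "1 - \<theta>"])

section \<open>Duality for the discrete problem\<close>

context
  fixes chi chim chip :: "nat \<Rightarrow> pt" and n m :: nat and f :: "nat \<Rightarrow> real"
begin

definition elongation :: "nat \<Rightarrow> (nat \<Rightarrow> real) \<Rightarrow> (nat \<Rightarrow> real) \<Rightarrow> real" where
  "elongation k u1 u2 = (\<Sum>i<n. Bmat chi chim chip 1 k i * u1 i + Bmat chi chim chip 2 k i * u2 i)"

definition deflection :: "nat \<Rightarrow> (nat \<Rightarrow> real) \<Rightarrow> real" where
  "deflection k w = (\<Sum>i<n. Dmat chi chim chip k i * w i)"

lemma dual_feasibleD:
  assumes "dual_feasible chi n chim chip m u1 u2 w t1 t2 t3" and "k < m"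
  shows "t1 k = 2 * barlen chim chip k" "t2 k = barlen chim chip k - elongation k u1 u2"
    "t3 k = - deflection k w" "inK (t1 k) (t2 k) (t3 k)"
  using assms
  by (auto simp: dual_feasible_def elongation_def deflection_def eq_diff_eq eq_neg_iff_add_eq_0)

lemma dual_feasible_iff:
  assumes "\<forall>k<m. barlen chim chip k > 0"
  shows "(\<exists>t1 t2 t3. dual_feasible chi n chim chip m u1 u2 w t1 t2 t3) \<longleftrightarrow>
    (\<forall>k<m. (deflection k w)\<^sup>2 \<le> 4 * barlen chim chip k * (barlen chim chip k - elongation k u1 u2))"
proof
  assume "\<exists>t1 t2 t3. dual_feasible chi n chim chip m u1 u2 w t1 t2 t3"
  then obtain t1 t2 t3 where feasible: "dual_feasible chi n chim chip m u1 u2 w t1 t2 t3" by blast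
  show "\<forall>k<m. (deflection k w)\<^sup>2 \<le>
      4 * barlen chim chip k * (barlen chim chip k - elongation k u1 u2)"
    using dual_feasibleD[OF feasible] by (simp add: inK_def)
next
  assume constraints: "\<forall>k<m. (deflection k w)\<^sup>2 \<le>
    4 * barlen chim chip k * (barlen chim chip k - elongation k u1 u2)"
  have "barlen chim chip k - elongation k u1 u2 \<ge> 0" if "k < m" for k
  proof -
    have "0 \<le> 4 * barlen chim chip k * (barlen chim chip k - elongation k u1 u2)"
      using constraints that zero_le_power2[of "deflection k w"] by (meson order_trans)
    moreover have "barlen chim chip k > 0" using assms that by simp
    ultimately show ?thesis by (simp add: zero_le_mult_iff)
  qed
  then have "dual_feasible chi n chim chip m u1 u2 w (\<lambda>k. 2 * barlen chim chip k)
      (\<lambda>k. barlen chim chip k - elongation k u1 u2) (\<lambda>k. - deflection k w)"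
    using assms constraints
    by (auto simp: dual_feasible_def inK_def elongation_def deflection_def less_imp_le)
  then show "\<exists>t1 t2 t3. dual_feasible chi n chim chip m u1 u2 w t1 t2 t3" by blast
qed

lemma dual_solution_kkt:
  assumes L_pos: "\<forall>k<m. barlen chim chip k > 0" and "dual_solution chi n chim chip m f u1 u2 w"
  shows "\<exists>\<mu>. (\<forall>k<m. \<mu> k \<ge> 0) \<and>
    (\<forall>k<m. \<mu> k \<noteq> 0 \<longrightarrow>
      (deflection k w)\<^sup>2 = 4 * barlen chim chip k * (barlen chim chip k - elongation k u1 u2)) \<and>
    (\<forall>u1' u2' w'. dual_obj n f w' = (\<Sum>k<m. \<mu> k *
       (2 * deflection k w * deflection k w' + 4 * barlen chim chip k * elongation k u1' u2')))"
proof -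
  define A where "A k v = elongation k (fst v) (fst (snd v))"
    for k and v :: "(nat \<Rightarrow> real) \<times> (nat \<Rightarrow> real) \<times> (nat \<Rightarrow> real)"
  define B where "B k v = deflection k (snd (snd v))"
    for k and v :: "(nat \<Rightarrow> real) \<times> (nat \<Rightarrow> real) \<times> (nat \<Rightarrow> real)"
  define F where "F v = dual_obj n f (snd (snd v))"
    for v :: "(nat \<Rightarrow> real) \<times> (nat \<Rightarrow> real) \<times> (nat \<Rightarrow> real)"
  have "linear (A k)" "linear (B k)" "linear F" for k
    by (rule linearI; simp add: A_def B_def F_def elongation_def deflection_def dual_obj_def
        scaleR_fun_def sum.distrib sum_distrib_left algebra_simps)+
  have feasible_iff:
    "(\<exists>t1 t2 t3. dual_feasible chi n chim chip m (fst v) (fst (snd v)) (snd (snd v)) t1 t2 t3) \<longleftrightarrow>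
      (\<forall>k<m. (B k v)\<^sup>2 \<le> 4 * barlen chim chip k * (barlen chim chip k - A k v))" for v
    using dual_feasible_iff[OF L_pos, of "fst v" "fst (snd v)" "snd (snd v)"]
    by (simp add: A_def B_def)
  have "\<exists>\<mu>. (\<forall>k\<in>{..<m}. \<mu> k \<ge> 0) \<and>
    (\<forall>k\<in>{..<m}. \<mu> k \<noteq> 0 \<longrightarrow>
      (B k (u1, u2, w))\<^sup>2 = 4 * barlen chim chip k * (barlen chim chip k - A k (u1, u2, w))) \<and>
    (\<forall>v. F v = (\<Sum>k\<in>{..<m}. \<mu> k * (2 * B k (u1, u2, w) * B k v + 4 * barlen chim chip k * A k v)))"
  proof (rule kkt_parabolic_constraints)
    show "(B k (u1, u2, w))\<^sup>2 \<le> 4 * barlen chim chip k * (barlen chim chip k - A k (u1, u2, w))"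
      if "k \<in> {..<m}" for k
      using assms(2) feasible_iff[of "(u1, u2, w)"] that by (auto simp: dual_solution_def)
    show "F v \<le> F (u1, u2, w)"
      if "\<And>k. k \<in> {..<m} \<Longrightarrow> (B k v)\<^sup>2 \<le> 4 * barlen chim chip k * (barlen chim chip k - A k v)" for v
      using assms(2) feasible_iff[of v] that by (auto simp: dual_solution_def F_def)
  qed (use L_pos \<open>\<And>k. linear (A k)\<close> \<open>\<And>k. linear (B k)\<close> \<open>linear F\<close> in auto)
  then show ?thesis
    by (auto simp: A_def B_def F_def)
qed

lemma virtual_work_transpose:
  "(\<Sum>k<m. s k * elongation k u1 u2 + q k * deflection k w) =
    (\<Sum>i<n. (\<Sum>k<m. Bmat chi chim chip 1 k i * s k) * u1 i
      + (\<Sum>k<m. Bmat chi chim chip 2 k i * s k) * u2 i + (\<Sum>k<m. Dmat chi chim chip k i * q k) * w i)"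
  by (simp add: elongation_def deflection_def sum_distrib_left sum_distrib_right sum.distrib
      sum.swap[of _ "{..<m}"] algebra_simps)

lemma sum_times_indicator: "i < n \<Longrightarrow> (\<Sum>j<n. c j * (if j = i then 1 else 0)) = (c i :: real)"
  by (simp add: if_distrib[of "times _"] cong: if_cong)

lemma equilibrium_iff_virtual_work:
  "(\<forall>i<n. (\<Sum>k<m. Bmat chi chim chip 1 k i * s k) = 0) \<and>
    (\<forall>i<n. (\<Sum>k<m. Bmat chi chim chip 2 k i * s k) = 0) \<and>
    (\<forall>i<n. (\<Sum>k<m. Dmat chi chim chip k i * q k) = f i) \<longleftrightarrow>
   (\<forall>u1 u2 w. (\<Sum>k<m. s k * elongation k u1 u2 + q k * deflection k w) = dual_obj n f w)"
  (is "?equilibrium \<longleftrightarrow> ?virtual_work")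
proof
  assume ?equilibrium
  then show ?virtual_work
    by (auto simp: virtual_work_transpose dual_obj_def intro!: sum.cong)
next
  assume ?virtual_work
  define e where "e i = (\<lambda>j. if j = i then 1 else 0 :: real)" for i :: nat
  have "(\<Sum>k<m. Bmat chi chim chip 1 k i * s k) = 0" "(\<Sum>k<m. Bmat chi chim chip 2 k i * s k) = 0"
    "(\<Sum>k<m. Dmat chi chim chip k i * q k) = f i" if "i < n" for i
    using \<open>?virtual_work\<close>[rule_format, of "e i" 0 0] \<open>?virtual_work\<close>[rule_format, of 0 "e i" 0]
      \<open>?virtual_work\<close>[rule_format, of 0 0 "e i"] that
    by (simp_all add: virtual_work_transpose dual_obj_def e_def sum_times_indicator)
  then show ?equilibrium by blast
qed

lemma dual_solution_primal_attained:
  assumes L_pos: "\<forall>k<m. barlen chim chip k > 0" and "dual_solution chi n chim chip m f u1 u2 w"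
  shows "\<exists>s q r. primal_feasible chi n chim chip m f s q r \<and>
    primal_obj chim chip m s r = dual_obj n f w"
proof -
  let ?L = "barlen chim chip" and ?b = "\<lambda>k. deflection k w"
  obtain \<mu> where \<mu>_nonneg: "\<forall>k<m. \<mu> k \<ge> 0"
    and tight: "\<forall>k<m. \<mu> k \<noteq> 0 \<longrightarrow> (?b k)\<^sup>2 = 4 * ?L k * (?L k - elongation k u1 u2)"
    and kkt: "\<forall>u1' u2' w'. dual_obj n f w' =
      (\<Sum>k<m. \<mu> k * (2 * ?b k * deflection k w' + 4 * ?L k * elongation k u1' u2'))"
    using dual_solution_kkt[OF assms] by blast
  \<comment> \<open>The multipliers are the bar forces; \<open>r\<close> puts \<open>(r, s, q)\<close> on the boundary of the cone.\<close>
  define s where "s k = 4 * ?L k * \<mu> k" for k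
  define q where "q k = 2 * \<mu> k * ?b k" for k
  define r where "r k = \<mu> k * (?b k)\<^sup>2 / (2 * ?L k)" for k
  have virtual_work: "(\<Sum>k<m. s k * elongation k u1' u2' + q k * deflection k w') = dual_obj n f w'"
    for u1' u2' w'
  proof -
    have "(\<Sum>k<m. s k * elongation k u1' u2' + q k * deflection k w')
        = (\<Sum>k<m. \<mu> k * (2 * ?b k * deflection k w' + 4 * ?L k * elongation k u1' u2'))"
      by (intro sum.cong) (simp_all add: s_def q_def algebra_simps)
    then show ?thesis using kkt by simp
  qed
  have "primal_feasible chi n chim chip m f s q r"
    unfolding primal_feasible_def equilibrium_iff_virtual_work
    using virtual_work L_pos \<mu>_nonneg
    by (auto simp: s_def r_def q_def inK_def field_simps power2_eq_square)
  moreover have "primal_obj chim chip m s r = dual_obj n f w"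
  proof -
    have "?L k * s k + 2 * (?L k * r k) = s k * elongation k u1 u2 + q k * deflection k w"
      if "k < m" for k
    proof -
      have "?L k * s k + 2 * (?L k * r k) = \<mu> k * (4 * (?L k)\<^sup>2 + (?b k)\<^sup>2)"
        using L_pos that
        by (simp add: s_def r_def field_simps power2_eq_square less_imp_neq[symmetric])
      also have "\<dots> = \<mu> k * (4 * ?L k * elongation k u1 u2 + 2 * (?b k)\<^sup>2)"
      proof (cases "\<mu> k = 0")
        case False
        then have "(?b k)\<^sup>2 = 4 * (?L k)\<^sup>2 - 4 * ?L k * elongation k u1 u2"
          using tight that by (simp add: power2_eq_square algebra_simps)
        then show ?thesis by simp
      qed simp
      also have "\<dots> = s k * elongation k u1 u2 + q k * deflection k w"
        by (simp add: s_def q_def power2_eq_square algebra_simps)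
      finally show ?thesis .
    qed
    then have "primal_obj chim chip m s r = (\<Sum>k<m. s k * elongation k u1 u2 + q k * deflection k w)"
      unfolding primal_obj_def sum_distrib_left sum.distrib[symmetric] by (intro sum.cong) auto
    then show ?thesis using virtual_work by simp
  qed
  ultimately show ?thesis by blast
qed

lemma duality_gap_eq:
  assumes "primal_feasible chi n chim chip m f s q r"
    and "dual_feasible chi n chim chip m u1 u2 w t1 t2 t3"
  shows "primal_obj chim chip m s r - dual_obj n f w = (\<Sum>k<m. r k * t1 k + s k * t2 k + q k * t3 k)"
proof -
  have "dual_obj n f w = (\<Sum>k<m. s k * elongation k u1 u2 + q k * deflection k w)"
    using assms(1) unfolding primal_feasible_def equilibrium_iff_virtual_work by simp
  moreover have "r k * t1 k + s k * t2 k + q k * t3 k =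
      barlen chim chip k * s k + 2 * (barlen chim chip k * r k)
      - (s k * elongation k u1 u2 + q k * deflection k w)" if "k < m" for k
    unfolding dual_feasibleD(1-3)[OF assms(2) that] by (simp add: algebra_simps)
  ultimately show ?thesis
    by (simp add: primal_obj_def sum_subtractf sum.distrib sum_distrib_left)
qed

lemma complementary_slackness:
  assumes "\<forall>k<m. barlen chim chip k > 0"
    and "primal_solution chi n chim chip m f s q r" and "dual_solution chi n chim chip m f u1 u2 w"
    and "dual_feasible chi n chim chip m u1 u2 w t1 t2 t3"
    and "k < m" and "s k \<noteq> 0"
  shows "2 * t1 k * t2 k = (t3 k)\<^sup>2"
proof -
  have primal: "primal_feasible chi n chim chip m f s q r"
    using assms(2) by (simp add: primal_solution_def)
  have pairing_nonneg: "r j * t1 j + s j * t2 j + q j * t3 j \<ge> 0" if "j < m" for j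
    using primal dual_feasibleD(4)[OF assms(4) that] that
    by (intro inK_pairing_nonneg) (auto simp: primal_feasible_def)
  obtain s' q' r' where "primal_feasible chi n chim chip m f s' q' r'"
    and attained: "primal_obj chim chip m s' r' = dual_obj n f w"
    using dual_solution_primal_attained[OF assms(1,3)] by blast
  then have "primal_obj chim chip m s r \<le> dual_obj n f w"
    using assms(2) unfolding primal_solution_def attained[symmetric] by blast
  then have "(\<Sum>j<m. r j * t1 j + s j * t2 j + q j * t3 j) \<le> 0"
    using duality_gap_eq[OF primal assms(4)] by simp
  moreover have "(\<Sum>j<m. r j * t1 j + s j * t2 j + q j * t3 j) \<ge> 0"
    using pairing_nonneg by (intro sum_nonneg) simp
  ultimately have "r k * t1 k + s k * t2 k + q k * t3 k = 0"
    using sum_nonneg_eq_0_iff[of "{..<m}" "\<lambda>j. r j * t1 j + s j * t2 j + q j * t3 j"]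
      pairing_nonneg assms(5) by simp
  then show ?thesis
    using primal dual_feasibleD(4)[OF assms(4,5)] assms(5,6)
    by (intro inK_pairing_zero_imp_boundary[of "r k" "s k" "q k"]) (auto simp: primal_feasible_def)
qed

lemma sum_node_indicator:
  assumes "inj_on chi {..<n}"
  shows "(\<Sum>i<n. (if chi i = p then 1 else 0) * v i) = node_fun chi n v p"
proof (cases "\<exists>i<n. chi i = p")
  case True
  then obtain i0 where i0: "i0 < n" "chi i0 = p" by blast
  have "(THE i. i < n \<and> chi i = p) = i0"
    using i0 assms by (auto simp: inj_on_def)
  moreover have "(\<Sum>i<n. (if chi i = p then 1 else 0) * v i) = (\<Sum>i<n. if i = i0 then v i else 0)"
    using i0 assms by (intro sum.cong) (auto simp: inj_on_def)
  ultimately show ?thesis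
    using True i0(1) by (simp add: node_fun_def)
qed (auto simp: node_fun_def)

lemma deflection_node_fun:
  assumes "inj_on chi {..<n}"
  shows "deflection k w = node_fun chi n w (chip k) - node_fun chi n w (chim k)"
proof -
  have "deflection k w = (\<Sum>i<n. (if chi i = chip k then 1 else 0) * w i)
      - (\<Sum>i<n. (if chi i = chim k then 1 else 0) * w i)"
    unfolding deflection_def Dmat_def inc_def sum_subtractf[symmetric]
    by (intro sum.cong) (auto simp: algebra_simps)
  then show ?thesis using sum_node_indicator[OF assms] by simp
qed

lemma elongation_node_fun:
  assumes "inj_on chi {..<n}"
  shows "elongation k u1 u2 =
    axial_elongation (node_fun chi n u1) (node_fun chi n u2) (chim k) (chip k)"
proof -
  have "(\<Sum>i<n. Bmat chi chim chip j k i * v i) =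
      deflection k v * (chip k - chim k) $ j / barlen chim chip k" for j v
    unfolding Bmat_def deflection_def Dmat_def sum_divide_distrib sum_distrib_right
    by (intro sum.cong) auto
  then show ?thesis
    unfolding elongation_def sum.distrib deflection_node_fun[OF assms] axial_elongation_def
      barlen_def
    by (simp add: add_divide_distrib)
qed

lemma dual_cone_gap_eq_bar_slack:
  assumes "inj_on chi {..<n}" and "dual_feasible chi n chim chip m u1 u2 w t1 t2 t3" and "k < m"
  shows "2 * t1 k * t2 k - (t3 k)\<^sup>2 =
    bar_slack (node_fun chi n u1) (node_fun chi n u2) (node_fun chi n w) (chim k) (chip k)"
  unfolding dual_feasibleD(1-3)[OF assms(2,3)] bar_slack_def barlen_def
    deflection_node_fun[OF assms(1)] elongation_node_fun[OF assms(1)]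
  by (simp add: power2_commute algebra_simps)

end

lemma bar_enumeration:
  assumes "bij_betw (\<lambda>k. {chim k, chip k}) {..<m} {e. \<exists>a\<in>X. \<exists>b\<in>X. a \<noteq> b \<and> e = {a, b}}"
  shows "\<forall>k<m. chim k \<noteq> chip k"
    and "\<And>a b. a \<in> X \<Longrightarrow> b \<in> X \<Longrightarrow> a \<noteq> b \<Longrightarrow> \<exists>k<m. {chim k, chip k} = {a, b}"
proof -
  have image: "(\<lambda>k. {chim k, chip k}) ` {..<m} = {e. \<exists>a\<in>X. \<exists>b\<in>X. a \<noteq> b \<and> e = {a, b}}"
    using assms by (rule bij_betw_imp_surj_on)
  show "\<forall>k<m. chim k \<noteq> chip k"
  proof (intro allI impI)
    fix k assume "k < m"
    then obtain a b where "a \<noteq> b" "{chim k, chip k} = {a, b}"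
      using image by blast
    then show "chim k \<noteq> chip k" by (auto simp: doubleton_eq_iff)
  qed
  show "\<exists>k<m. {chim k, chip k} = {a, b}" if "a \<in> X" "b \<in> X" "a \<noteq> b" for a b
  proof -
    have "{a, b} \<in> (\<lambda>k. {chim k, chip k}) ` {..<m}" using image that by blast
    then show ?thesis by force
  qed
qed

theorem proposition6p2:
  fixes \<Omega> :: "pt set" and X :: "pt set" and fX :: "pt set \<Rightarrow> real"
    and chi chim chip :: "nat \<Rightarrow> pt" and n m :: nat
    and s q r u1 u2 w :: "nat \<Rightarrow> real" and x1 x2 x3 :: pt and k :: nat
  assumes "open \<Omega>" and "connected \<Omega>" and "bounded \<Omega>" and "\<Omega> \<noteq> {}"
    and "finite X" and "X \<subseteq> closure \<Omega>"
    and "X - frontier \<Omega> \<subseteq> interior (convex hull (X \<inter> frontier \<Omega>))"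
    and "bij_betw chi {..<n} (X - frontier \<Omega>)"
    and "m = card X * (card X - 1) div 2"
    and "bij_betw (\<lambda>k. {chim k, chip k}) {..<m} {e. \<exists>a\<in>X. \<exists>b\<in>X. a \<noteq> b \<and> e = {a, b}}"
    and "primal_solution chi n chim chip m (\<lambda>i. fX {chi i}) s q r"
    and "dual_solution chi n chim chip m (\<lambda>i. fX {chi i}) u1 u2 w"
    and "x1 \<in> X" and "x2 \<in> X" and "x3 \<in> X"
    and "collinear {x1, x2, x3}" and "x2 \<in> closed_segment x1 x3"
    and "k < m" and "{chim k, chip k} = {x1, x3}"
    and "s k \<noteq> 0"
  shows "collinear {(x1, node_fun chi n (\<lambda>i. w i / 2) x1),
                    (x2, node_fun chi n (\<lambda>i. w i / 2) x2),
                    (x3, node_fun chi n (\<lambda>i. w i / 2) x3)}"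
proof -
  have inj: "inj_on chi {..<n}" using assms(8) by (rule bij_betw_imp_inj_on)
  note bars = bar_enumeration[OF assms(10)]
  have L_pos: "\<forall>k<m. barlen chim chip k > 0" using bars(1) by (auto simp: barlen_def)
  obtain t1 t2 t3 where feasible: "dual_feasible chi n chim chip m u1 u2 w t1 t2 t3"
    using assms(12) by (auto simp: dual_solution_def)
  define W where "W = node_fun chi n w"
  let ?slack = "bar_slack (node_fun chi n u1) (node_fun chi n u2) W"
  have slack_nonneg: "?slack a b \<ge> 0" if ab: "a \<in> X" "b \<in> X" for a b
  proof (cases "a = b")
    case False
    then obtain j where "j < m" "{chim j, chip j} = {a, b}" using bars(2)[OF ab] by blast
    then show ?thesis
      using dual_cone_gap_eq_bar_slack[OF inj feasible \<open>j < m\<close>]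
        dual_feasibleD(4)[OF feasible \<open>j < m\<close>]
      by (auto simp: W_def inK_def doubleton_eq_iff bar_slack_commute)
  qed simp
  have "?slack x1 x3 = 0"
    using complementary_slackness[OF L_pos assms(11,12) feasible assms(18,20)]
      dual_cone_gap_eq_bar_slack[OF inj feasible assms(18)] assms(19)
    by (auto simp: W_def doubleton_eq_iff bar_slack_commute)
  moreover obtain \<theta> where \<theta>: "0 \<le> \<theta>" "\<theta> \<le> 1" "x2 = (1 - \<theta>) *\<^sub>R x1 + \<theta> *\<^sub>R x3"
    using assms(17) by (auto simp: closed_segment_def)
  ultimately have "W x2 = (1 - \<theta>) * W x1 + \<theta> * W x3"
    using affine_on_tight_bar[OF \<theta>] slack_nonneg assms(13-15) by blast
  moreover have "node_fun chi n (\<lambda>i. w i / 2) = (\<lambda>x. W x / 2)"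
    by (auto simp: W_def node_fun_def fun_eq_iff)
  ultimately show ?thesis
    by (intro collinear_graph_of_affine[OF \<theta>(3)]) (simp add: field_simps)
qed

end
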